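(* Every $\epsilon_4$-segment expath $P$ from $u$ to $v$ in $G$ is an $\epsilon_4$-expath.
   Context: $G=(V,E)$ is an undirected graph with $n$ vertices and real edge weights in $[1,W]$; $|P|$ is the weighted length of a path $P$ and $P[a,b]$ its subpath between $a$ and $b$. Let $V=U_1,U_2,\dots,U_p$ be subsets of $V$; the level $l(v)$ of $v$ is the largest $l$ with $v\in U_l$, and $G_i$ is the subgraph of $G$ induced by the vertices of level $\le i$. Let $\epsilon_4$ be a real parameter with $0<\epsilon_4<\sqrt2-1$. $\epsilon_4$-segments: for a path $P=(u=v_0,\dots,v_\ell=v)$ and $1\le i,j<\ell$, $v_i,v_j$ lie in the same segment if either both $|P[u,v_i]|,|P[u,v_j]|\le|P|/2$ and $\lfloor\log_{1+\epsilon_4}|P[u,v_i]|\rfloor=\lfloor\log_{1+\epsilon_4}|P[u,v_j]|\rfloor$, or both $|P[v_i,v]|,|P[v_j,v]|<|P|/2$ and $\lfloor\log_{1+\epsilon_4}|P[v_i,v]|\rfloor=\lfloor\log_{1+\epsilon_4}|P[v_j,v]|\rfloor$; classes are contiguous subpaths and $u,v$ are in no segment. $P$ is an $\epsilon_4$-segment expath if every segment $P[x,y]$ is a shortest path in $G_i$ for some $1\le i\le p$. Let $B=\lceil\log_{1+\epsilon_4}(nW)\rceil$. $P$ (from $u$ to $v$) is an $\epsilon_4$-expath if it is the concatenation $e_0,P_0,e_1,P_1,\dots,e_{2B+1},P_{2B+1},e_{2B+2}$ where each $e_i$ is empty or a single edge and each $P_k=P[u_k,v_k]$ is either empty or a shortest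 path in $G_i$ for some $1\le i\le p$, and moreover $|P[u,v_k]|\le(1+\epsilon_4)^k$ whenever $k<B+1$ and $|P[u_k,v]|\le(1+\epsilon_4)^{2B+1-k}$ whenever $k\ge B+1$ (for nonempty $P_k$). *)

theory Defs
  imports Complex_Main
begin

definition wgraph :: "'v set \<Rightarrow> ('v \<times> 'v) set \<Rightarrow> ('v \<Rightarrow> 'v \<Rightarrow> real) \<Rightarrow> real \<Rightarrow> bool" where
  "wgraph V E w W \<longleftrightarrow> finite V \<and> E \<subseteq> V \<times> V \<and> sym E \<and> (\<forall>x. (x, x) \<notin> E) \<and>
     (\<forall>x y. (x, y) \<in> E \<longrightarrow> w x y = w y x \<and> 1 \<le> w x y \<and> w x y \<le> W)"

definition levels :: "'v set \<Rightarrow> (nat \<Rightarrow> 'v set) \<Rightarrow> nat \<Rightarrow> bool" where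
  "levels V U p \<longleftrightarrow> 1 \<le> p \<and> U 1 = V \<and> (\<forall>i\<in>{1..p}. U i \<subseteq> V)"

definition level :: "(nat \<Rightarrow> 'v set) \<Rightarrow> nat \<Rightarrow> 'v \<Rightarrow> nat" where
  "level U p v = Max {l. 1 \<le> l \<and> l \<le> p \<and> v \<in> U l}"

text \<open>Vertex set of G_i (induced subgraph on vertices of level at most i).\<close>
definition Gvert :: "'v set \<Rightarrow> (nat \<Rightarrow> 'v set) \<Rightarrow> nat \<Rightarrow> nat \<Rightarrow> 'v set" where
  "Gvert V U p i = {v \<in> V. level U p v \<le> i}"

definition is_walk_in :: "('v \<times> 'v) set \<Rightarrow> 'v set \<Rightarrow> 'v list \<Rightarrow> bool" where
  "is_walk_in E S P \<longleftrightarrow> P \<noteq> [] \<and> set P \<subseteq> S \<and> (\<forall>j. j + 1 < length P \<longrightarrow> (P ! j, P ! (j + 1)) \<in> E)"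

definition is_path_in :: "('v \<times> 'v) set \<Rightarrow> 'v set \<Rightarrow> 'v list \<Rightarrow> bool" where
  "is_path_in E S P \<longleftrightarrow> is_walk_in E S P \<and> distinct P"

definition plen :: "('v \<Rightarrow> 'v \<Rightarrow> real) \<Rightarrow> 'v list \<Rightarrow> real" where
  "plen w P = (\<Sum>j<length P - 1. w (P ! j) (P ! (j + 1)))"

definition shortest_in :: "('v \<times> 'v) set \<Rightarrow> ('v \<Rightarrow> 'v \<Rightarrow> real) \<Rightarrow> 'v set \<Rightarrow> 'v list \<Rightarrow> bool" where
  "shortest_in E w S P \<longleftrightarrow> is_walk_in E S P \<and>
     (\<forall>Q. is_walk_in E S Q \<and> hd Q = hd P \<and> last Q = last P \<longrightarrow> plen w P \<le> plen w Q)"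

text \<open>Subpath P[v_i, v_j] for i \<le> j (vertex indices).\<close>
definition subpath :: "'v list \<Rightarrow> nat \<Rightarrow> nat \<Rightarrow> 'v list" where
  "subpath P i j = take (j - i + 1) (drop i P)"

definition same_seg :: "('v \<Rightarrow> 'v \<Rightarrow> real) \<Rightarrow> real \<Rightarrow> 'v list \<Rightarrow> nat \<Rightarrow> nat \<Rightarrow> bool" where
  "same_seg w eps P i j \<longleftrightarrow>
     (let l = length P - 1; L = plen w P;
          du = (\<lambda>k. plen w (subpath P 0 k)); dv = (\<lambda>k. plen w (subpath P k l))
      in 1 \<le> i \<and> i < l \<and> 1 \<le> j \<and> j < l \<and>
        ((du i \<le> L / 2 \<and> du j \<le> L / 2 \<and>
            \<lfloor>log (1 + eps) (du i)\<rfloor> = \<lfloor>log (1 + eps) (du j)\<rfloor>) \<or>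
         (dv i < L / 2 \<and> dv j < L / 2 \<and>
            \<lfloor>log (1 + eps) (dv i)\<rfloor> = \<lfloor>log (1 + eps) (dv j)\<rfloor>)))"

definition is_segment :: "('v \<Rightarrow> 'v \<Rightarrow> real) \<Rightarrow> real \<Rightarrow> 'v list \<Rightarrow> nat \<Rightarrow> nat \<Rightarrow> bool" where
  "is_segment w eps P a b \<longleftrightarrow> 1 \<le> a \<and> a \<le> b \<and> b < length P - 1 \<and>
     {k. same_seg w eps P a k} = {a..b}"

definition segment_expath ::
  "'v set \<Rightarrow> ('v \<times> 'v) set \<Rightarrow> ('v \<Rightarrow> 'v \<Rightarrow> real) \<Rightarrow> (nat \<Rightarrow> 'v set) \<Rightarrow> nat \<Rightarrow> real \<Rightarrow> 'v list \<Rightarrow> 'v \<Rightarrow> 'v \<Rightarrow> bool" where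
  "segment_expath V E w U p eps P u v \<longleftrightarrow>
     is_path_in E V P \<and> hd P = u \<and> last P = v \<and>
     (\<forall>a b. is_segment w eps P a b \<longrightarrow>
        (\<exists>i\<in>{1..p}. shortest_in E w (Gvert V U p i) (subpath P a b)))"

definition Bnum :: "real \<Rightarrow> nat \<Rightarrow> real \<Rightarrow> nat" where
  "Bnum eps n W = nat \<lceil>log (1 + eps) (real n * W)\<rceil>"

text \<open>Expath: P = e_0,P_0,e_1,...,e_{2B+1},P_{2B+1},e_{2B+2}, where the (nonempty) piece P_k is
  the subpath P[v_{a k}, v_{b k}] (a k < b k) and a gap of at most one edge (the e_i) separates
  consecutive pieces.  A piece with a k = b k is the empty piece.\<close>
definition expath ::
  "'v set \<Rightarrow> ('v \<times> 'v) set \<Rightarrow> ('v \<Rightarrow> 'v \<Rightarrow> real) \<Rightarrow> real \<Rightarrow> (nat \<Rightarrow> 'v set) \<Rightarrow> nat \<Rightarrow> real \<Rightarrow> 'v list \<Rightarrow> 'v \<Rightarrow> 'v \<Rightarrow> bool" where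
  "expath V E w W U p eps P u v \<longleftrightarrow>
     is_path_in E V P \<and> hd P = u \<and> last P = v \<and>
     (let B = Bnum eps (card V) W; l = length P - 1 in
      \<exists>a b :: nat \<Rightarrow> nat.
        a 0 \<le> 1 \<and>
        (\<forall>k\<le>2*B+1. a k \<le> b k) \<and>
        (\<forall>k<2*B+1. b k \<le> a (k + 1) \<and> a (k + 1) \<le> b k + 1) \<and>
        b (2*B+1) \<le> l \<and> l \<le> b (2*B+1) + 1 \<and>
        (\<forall>k\<le>2*B+1. a k < b k \<longrightarrow>
           (\<exists>i\<in>{1..p}. shortest_in E w (Gvert V U p i) (subpath P (a k) (b k))) \<and>
           (k < B + 1 \<longrightarrow> plen w (subpath P 0 (b k)) \<le> (1 + eps) ^ k) \<and>
           (B + 1 \<le> k \<longrightarrow> plen w (subpath P (a k) l) \<le> (1 + eps) ^ (2*B+1-k))))"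

end

theory Submission
  imports Defs
begin

(* Label the vertex v_i of P by seg_class i: 0 for u, 2B+1 for v, the number
   floor(log_{1+eps} |P[u,v_i]|) + 1 in [1,B] for an inner vertex in the first half of P and
   2B - floor(log_{1+eps} |P[v_i,v]|) in [B+1,2B] for one in the second half; both logarithms lie
   in [0,B) because edge weights are at least 1 and |P| < n W <= (1+eps)^B.  Two inner vertices are
   in the same eps-segment iff they carry the same label, and the labelling is monotone along P.
   Hence the label classes are consecutive intervals of P: the class of label k is the piece P_k,
   successive pieces are at most one edge apart, and x < (1+eps)^(floor(log_{1+eps} x) + 1) gives
   the length bounds. *)

(* For a labelling c monotone on {..l}, the indices i <= l with c i = k form the interval
   from class_start c l k to class_start c l (Suc k) - 1; class_end picks the empty piece
   class_start = class_end when this interval is empty. *)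
definition class_start :: "(nat \<Rightarrow> nat) \<Rightarrow> nat \<Rightarrow> nat \<Rightarrow> nat" where
  "class_start c l k = (LEAST i. i = Suc l \<or> k \<le> c i)"

definition class_end :: "(nat \<Rightarrow> nat) \<Rightarrow> nat \<Rightarrow> nat \<Rightarrow> nat" where
  "class_end c l k = max (class_start c l k) (class_start c l (Suc k) - 1)"

lemma class_start_le_Suc: "class_start c l k \<le> Suc l"
  unfolding class_start_def by (rule Least_le) simp

lemma class_start_le: "k \<le> c i \<Longrightarrow> class_start c l k \<le> i"
  unfolding class_start_def by (rule Least_le) simp

lemma class_start_0 [simp]: "class_start c l 0 = 0"
  using class_start_le[of 0 c 0] by simp

lemma class_start_mono: "k \<le> k' \<Longrightarrow> class_start c l k \<le> class_start c l k'"
  unfolding class_start_def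
  by (rule Least_le) (metis (mono_tags, lifting) LeastI le_trans order_refl)

lemma less_class_start_iff:
  assumes "mono_on {..l} c" "i \<le> l"
  shows "i < class_start c l k \<longleftrightarrow> c i < k"
proof
  assume "i < class_start c l k"
  then show "c i < k"
    using not_less_Least[of i "\<lambda>i. i = Suc l \<or> k \<le> c i"] assms(2)
    unfolding class_start_def by auto
next
  assume "c i < k"
  show "i < class_start c l k"
  proof (rule ccontr)
    let ?s = "class_start c l k"
    assume "\<not> i < ?s"
    then have "?s \<le> l" using assms(2) by simp
    moreover have "?s = Suc l \<or> k \<le> c ?s"
      unfolding class_start_def by (rule LeastI[of _ "Suc l"]) simp
    ultimately have "k \<le> c ?s" by simp
    also have "c ?s \<le> c i" using mono_onD[OF assms(1)] \<open>?s \<le> l\<close> \<open>\<not> i < ?s\<close> assms(2) by simp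
    finally show False using \<open>c i < k\<close> by simp
  qed
qed

lemma class_start_le_class_end: "class_start c l k \<le> class_end c l k"
  by (simp add: class_end_def)

lemma class_end_le_class_start_Suc: "class_end c l k \<le> class_start c l (Suc k)"
  using class_start_mono[of k "Suc k" c l] by (simp add: class_end_def)

lemma class_start_Suc_le_Suc_class_end: "class_start c l (Suc k) \<le> Suc (class_end c l k)"
  by (simp add: class_end_def)

lemma class_end_eq_last:
  assumes "mono_on {..l} c" "c l = K"
  shows "class_end c l K = l"
proof -
  have "class_start c l K \<le> l" using class_start_le[of K c l] assms(2) by simp
  moreover have "class_start c l (Suc K) = Suc l"
    using less_class_start_iff[OF assms(1), of l "Suc K"] assms(2) class_start_le_Suc[of c l "Suc K"]
    by simp
  ultimately show ?thesis by (simp add: class_end_def)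
qed

lemma class_eq_interval:
  assumes "mono_on {..l} c" "class_start c l k < class_end c l k"
  shows "{i. i \<le> l \<and> c i = k} = {class_start c l k..class_end c l k}"
proof -
  have end_eq: "class_end c l k = class_start c l (Suc k) - 1"
    using assms(2) by (simp add: class_end_def)
  have end_le: "class_end c l k \<le> l" using end_eq class_start_le_Suc[of c l "Suc k"] by simp
  have class_iff: "i \<le> l \<Longrightarrow> c i = k \<longleftrightarrow> class_start c l k \<le> i \<and> i \<le> class_end c l k" for i
    using less_class_start_iff[OF assms(1), of i k] less_class_start_iff[OF assms(1), of i "Suc k"] end_eq
      assms(2) by auto
  show ?thesis
  proof (intro set_eqI)
    fix i
    show "i \<in> {i. i \<le> l \<and> c i = k} \<longleftrightarrow> i \<in> {class_start c l k..class_end c l k}"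
      using class_iff[of i] end_le by (cases "i \<le> l") auto
  qed
qed

lemma nat_floor_log_less:
  assumes "1 < b" "1 \<le> x" "x < b ^ n"
  shows "nat \<lfloor>log b x\<rfloor> < n"
proof -
  have "log b x < log b (b ^ n)" using assms by (subst log_less_cancel_iff) auto
  also have "\<dots> = n" using assms(1) by simp
  finally show ?thesis using assms by (simp add: nat_less_iff floor_less_iff)
qed

lemma less_power_Suc_nat_floor_log:
  assumes "1 < b" "0 < x"
  shows "x < b ^ Suc (nat \<lfloor>log b x\<rfloor>)"
proof -
  have "x = b powr log b x" using assms by simp
  also have "\<dots> < b powr real (Suc (nat \<lfloor>log b x\<rfloor>))"
    using assms(1) real_of_int_floor_add_one_gt[of "log b x"] by (intro powr_less_mono) linarith+
  also have "\<dots> = b ^ Suc (nat \<lfloor>log b x\<rfloor>)" using assms(1) by (intro powr_realpow) simp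
  finally show ?thesis .
qed

lemma le_power_nat_ceiling_log:
  assumes "1 < b" "0 < x"
  shows "x \<le> b ^ nat \<lceil>log b x\<rceil>"
proof -
  have "x = b powr log b x" using assms by simp
  also have "\<dots> \<le> b powr real (nat \<lceil>log b x\<rceil>)"
    using assms(1) by (intro powr_mono) linarith+
  also have "\<dots> = b ^ nat \<lceil>log b x\<rceil>" using assms(1) by (intro powr_realpow) simp
  finally show ?thesis .
qed

lemma nat_floor_log_mono:
  assumes "1 < b" "0 < x" "x \<le> y"
  shows "nat \<lfloor>log b x\<rfloor> \<le> nat \<lfloor>log b y\<rfloor>"
  using assms by (intro nat_mono floor_mono) simp

locale prefix_distances =
  fixes base :: real and B :: nat and d :: "nat \<Rightarrow> real" and l :: nat
  assumes base_gt_1: "1 < base"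
    and d_0: "d 0 = 0"
    and d_step: "\<And>i. i < l \<Longrightarrow> d i + 1 \<le> d (Suc i)"
    and d_l_less: "d l < base ^ B"
begin

lemma d_increase: "i \<le> j \<Longrightarrow> j \<le> l \<Longrightarrow> d i + real (j - i) \<le> d j"
proof (induction j rule: dec_induct)
  case (step j)
  then show ?case using d_step[of j] by (simp add: Suc_diff_le)
qed simp

lemma inner_distance_bounds:
  assumes "0 < i" "i < l"
  shows "1 \<le> d i" "1 \<le> d l - d i" "d i < base ^ B" "d l - d i < base ^ B"
  using d_increase[of 0 i] d_increase[of i l] d_l_less d_0 assms by auto

definition seg_class :: "nat \<Rightarrow> nat" where
  "seg_class i = (if l \<le> i then 2*B+1 else if i = 0 then 0
     else if d i \<le> d l / 2 then Suc (nat \<lfloor>log base (d i)\<rfloor>)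
     else 2*B - nat \<lfloor>log base (d l - d i)\<rfloor>)"

lemma seg_class_0 [simp]: "0 < l \<Longrightarrow> seg_class 0 = 0"
  by (simp add: seg_class_def)

lemma seg_class_last [simp]: "seg_class l = 2*B+1"
  by (simp add: seg_class_def)

lemma seg_class_first_half:
  assumes "0 < i" "i < l" "d i \<le> d l / 2"
  shows "0 < seg_class i" "seg_class i \<le> B" "d i < base ^ seg_class i"
  using nat_floor_log_less[OF base_gt_1, of "d i" B] less_power_Suc_nat_floor_log[OF base_gt_1, of "d i"]
    inner_distance_bounds[OF assms(1,2)] assms
  by (auto simp: seg_class_def)

lemma seg_class_second_half:
  assumes "0 < i" "i < l" "\<not> d i \<le> d l / 2"
  shows "B < seg_class i" "seg_class i \<le> 2*B" "d l - d i < base ^ (2*B+1 - seg_class i)"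
proof -
  let ?m = "nat \<lfloor>log base (d l - d i)\<rfloor>"
  have "?m < B" "d l - d i < base ^ Suc ?m"
    using nat_floor_log_less[OF base_gt_1, of "d l - d i" B]
      less_power_Suc_nat_floor_log[OF base_gt_1, of "d l - d i"] inner_distance_bounds[OF assms(1,2)]
    by auto
  moreover have "seg_class i = 2*B - ?m" using assms by (simp add: seg_class_def)
  ultimately show "B < seg_class i" "seg_class i \<le> 2*B" "d l - d i < base ^ (2*B+1 - seg_class i)"
    by (simp_all add: Suc_diff_le)
qed

lemma seg_class_inner_iff:
  assumes "i \<le> l"
  shows "0 < i \<and> i < l \<longleftrightarrow> 0 < seg_class i \<and> seg_class i \<le> 2*B"
  using seg_class_first_half[of i] seg_class_second_half[of i] assms
  by (cases "0 < i \<and> i < l"; cases "d i \<le> d l / 2") (auto simp: seg_class_def)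

lemma mono_seg_class: "mono seg_class"
proof (rule monoI)
  fix i j :: nat
  assume "i \<le> j"
  consider "l \<le> j" | "i = 0" "j < l" | "0 < i" "j < l" by linarith
  then show "seg_class i \<le> seg_class j"
  proof cases
    case 1
    then show ?thesis
      using seg_class_inner_iff[of i] by (cases "i \<le> l") (auto simp: seg_class_def)
  next
    case 2
    then show ?thesis by (simp add: seg_class_def)
  next
    case 3
    note inner = this
    have "d i \<le> d j" using d_increase[of i j] \<open>i \<le> j\<close> inner by simp
    have i_bounds: "1 \<le> d i" "1 \<le> d l - d j"
      using inner_distance_bounds[of i] inner_distance_bounds[of j] inner \<open>i \<le> j\<close> by auto
    consider "d j \<le> d l / 2" | "d i \<le> d l / 2" "\<not> d j \<le> d l / 2" | "\<not> d i \<le> d l / 2"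
      by linarith
    then show ?thesis
    proof cases
      case 1
      then show ?thesis
        using inner \<open>i \<le> j\<close> \<open>d i \<le> d j\<close> i_bounds nat_floor_log_mono[OF base_gt_1, of "d i" "d j"]
        by (simp add: seg_class_def)
    next
      case 2
      then show ?thesis
        using seg_class_first_half[of i] seg_class_second_half[of j] inner \<open>i \<le> j\<close> by simp
    next
      case 3
      then show ?thesis
        using inner \<open>i \<le> j\<close> \<open>d i \<le> d j\<close> i_bounds
          nat_floor_log_mono[OF base_gt_1, of "d l - d j" "d l - d i"]
        by (simp add: seg_class_def diff_le_mono2)
    qed
  qed
qed

lemma seg_class_eq_iff:
  assumes "0 < i" "i < l" "0 < j" "j < l"
  shows "seg_class i = seg_class j \<longleftrightarrow>
    (d i \<le> d l / 2 \<and> d j \<le> d l / 2 \<and> \<lfloor>log base (d i)\<rfloor> = \<lfloor>log base (d j)\<rfloor>) \<or>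
    (d l - d i < d l / 2 \<and> d l - d j < d l / 2 \<and>
      \<lfloor>log base (d l - d i)\<rfloor> = \<lfloor>log base (d l - d j)\<rfloor>)"
proof -
  have floor_nonneg: "0 \<le> \<lfloor>log base x\<rfloor>" if "1 \<le> x" for x
    using that base_gt_1 by simp
  note bounds = inner_distance_bounds[OF assms(1,2)] inner_distance_bounds[OF assms(3,4)]
  consider "d i \<le> d l / 2" "d j \<le> d l / 2" | "d i \<le> d l / 2 \<longleftrightarrow> \<not> d j \<le> d l / 2"
    | "\<not> d i \<le> d l / 2" "\<not> d j \<le> d l / 2"
    by linarith
  then show ?thesis
  proof cases
    case 1
    then show ?thesis
      using assms bounds floor_nonneg[of "d i"] floor_nonneg[of "d j"]
      by (auto simp: seg_class_def eq_nat_nat_iff)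
  next
    case 2
    then show ?thesis
      using seg_class_first_half[of i] seg_class_second_half[of i]
        seg_class_first_half[of j] seg_class_second_half[of j] assms
      by (cases "d i \<le> d l / 2") auto
  next
    case 3
    have "nat \<lfloor>log base (d l - d i)\<rfloor> < B" "nat \<lfloor>log base (d l - d j)\<rfloor> < B"
      using nat_floor_log_less[OF base_gt_1] bounds by auto
    then have "seg_class i = seg_class j \<longleftrightarrow>
        nat \<lfloor>log base (d l - d i)\<rfloor> = nat \<lfloor>log base (d l - d j)\<rfloor>"
      using 3 assms by (auto simp: seg_class_def)
    then show ?thesis
      using 3 bounds floor_nonneg[of "d l - d i"] floor_nonneg[of "d l - d j"]
      by (auto simp: eq_nat_nat_iff)
  qed
qed

lemma class_interval_inner:
  assumes "a < b" "{i. i \<le> l \<and> seg_class i = k} = {a..b}"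
  shows "0 < a" "b < l"
proof -
  have "a \<in> {i. i \<le> l \<and> seg_class i = k}" "b \<in> {i. i \<le> l \<and> seg_class i = k}"
    unfolding assms(2) using assms(1) by auto
  then have ab: "a \<le> l" "b \<le> l" "seg_class a = k" "seg_class b = k"
    by auto
  show "0 < a"
  proof (rule ccontr)
    assume "\<not> 0 < a"
    then have "k = 0" using ab assms(1) by simp
    then show False using ab assms(1) seg_class_inner_iff[of b] by (cases "b = l") auto
  qed
  show "b < l"
  proof (rule ccontr)
    assume "\<not> b < l"
    then have "k = 2*B+1" using ab by simp
    then show False using ab assms(1) seg_class_inner_iff[of a] by (cases "a = 0") auto
  qed
qed

end

lemma plen_subpath:
  assumes "i \<le> j" "j < length P"
  shows "plen w (subpath P i j) = (\<Sum>t = i..<j. w (P ! t) (P ! Suc t))"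
proof -
  have "length (subpath P i j) = Suc (j - i)" "\<And>s. s \<le> j - i \<Longrightarrow> subpath P i j ! s = P ! (i + s)"
    using assms by (auto simp: subpath_def)
  then have "plen w (subpath P i j) = (\<Sum>s<j - i. w (P ! (i + s)) (P ! Suc (i + s)))"
    unfolding plen_def by (intro sum.cong) auto
  also have "\<dots> = (\<Sum>t = i..<j. w (P ! t) (P ! Suc t))"
    by (simp add: sum.atLeastLessThan_shift_0[of _ i j] lessThan_atLeast0)
  finally show ?thesis .
qed

lemma plen_subpath_split:
  "i \<le> j \<Longrightarrow> j \<le> k \<Longrightarrow> k < length P \<Longrightarrow>
    plen w (subpath P i k) = plen w (subpath P i j) + plen w (subpath P j k)"
  by (simp add: plen_subpath sum.atLeastLessThan_concat)

lemma subpath_whole: "subpath P 0 (length P - 1) = P"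
  by (simp add: subpath_def)

lemma path_prefix_distances:
  assumes "wgraph V E w W" "is_path_in E V P" "0 < eps"
  shows "prefix_distances (1 + eps) (Bnum eps (card V) W) (\<lambda>i. plen w (subpath P 0 i)) (length P - 1)"
proof
  let ?l = "length P - 1"
  have edge: "(P ! i, P ! Suc i) \<in> E" if "i < ?l" for i
    using assms(2) that unfolding is_path_in_def is_walk_in_def by auto
  have weight: "1 \<le> w x y \<and> w x y \<le> W" if "(x, y) \<in> E" for x y
    using assms(1) that unfolding wgraph_def by blast
  show "1 < 1 + eps" using assms(3) by simp
  show "plen w (subpath P 0 0) = 0"
    by (simp add: subpath_def plen_def take_Suc)
  show "plen w (subpath P 0 i) + 1 \<le> plen w (subpath P 0 (Suc i))" if "i < ?l" for i
    using that plen_subpath[of 0 i P w] plen_subpath[of 0 "Suc i" P w] weight[OF edge[OF that]] by simp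
  show "plen w (subpath P 0 ?l) < (1 + eps) ^ Bnum eps (card V) W"
  proof (cases "?l = 0")
    case True
    then show ?thesis using assms(3) by (simp add: plen_def subpath_def)
  next
    case False
    have "1 \<le> W" using weight[OF edge[of 0]] False by auto
    have "length P = card (set P)"
      using assms(2) distinct_card[of P] unfolding is_path_in_def by simp
    also have "\<dots> \<le> card V"
      using assms card_mono[of V "set P"] unfolding is_path_in_def is_walk_in_def wgraph_def by blast
    finally have "?l < card V" using False by linarith
    have "plen w P \<le> real ?l * W"
      unfolding plen_def using sum_bounded_above[of "{..<?l}" _ W] weight edge by simp
    also have "\<dots> < real (card V) * W" using \<open>?l < card V\<close> \<open>1 \<le> W\<close> by simp
    also have "\<dots> \<le> (1 + eps) ^ Bnum eps (card V) W"
      unfolding Bnum_def using assms(3) \<open>?l < card V\<close> \<open>1 \<le> W\<close>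
      by (intro le_power_nat_ceiling_log) auto
    finally show ?thesis by (simp only: subpath_whole)
  qed
qed

locale weighted_path_segments =
  prefix_distances "1 + eps" B "\<lambda>i. plen w (subpath P 0 i)" "length P - 1"
  for eps :: real and B :: nat and w :: "'v \<Rightarrow> 'v \<Rightarrow> real" and P :: "'v list"
begin

lemma plen_suffix:
  "k \<le> length P - 1 \<Longrightarrow> plen w (subpath P k (length P - 1)) = plen w P - plen w (subpath P 0 k)"
  using plen_subpath_split[of 0 k "length P - 1" P w] subpath_whole[of P] by (cases P) (auto simp: plen_def[of w "[]"])

lemma same_seg_iff_seg_class:
  "same_seg w eps P i j \<longleftrightarrow>
    0 < i \<and> i < length P - 1 \<and> 0 < j \<and> j < length P - 1 \<and> seg_class i = seg_class j"
proof (cases "0 < i \<and> i < length P - 1 \<and> 0 < j \<and> j < length P - 1")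
  case True
  then show ?thesis
    using seg_class_eq_iff[of i j] plen_suffix[of i] plen_suffix[of j] subpath_whole[of P]
    unfolding same_seg_def Let_def
    by simp
next
  case False
  then show ?thesis by (auto simp: same_seg_def Let_def)
qed

lemma mono_on_seg_class: "mono_on {..length P - 1} seg_class"
  using mono_seg_class by (rule mono_imp_mono_on)

lemma class_end_seg_class_last: "class_end seg_class (length P - 1) (2*B+1) = length P - 1"
  using class_end_eq_last[OF mono_on_seg_class seg_class_last] .

lemma class_piece:
  fixes k :: nat
  defines "a \<equiv> class_start seg_class (length P - 1) k"
    and "b \<equiv> class_end seg_class (length P - 1) k"
  assumes "a < b"
  shows "is_segment w eps P a b"
    and "k < B + 1 \<Longrightarrow> plen w (subpath P 0 b) \<le> (1 + eps) ^ k"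
    and "B + 1 \<le> k \<Longrightarrow> plen w (subpath P a (length P - 1)) \<le> (1 + eps) ^ (2*B+1-k)"
proof -
  have class_eq: "{i. i \<le> length P - 1 \<and> seg_class i = k} = {a..b}"
    using class_eq_interval[OF mono_on_seg_class] assms(3) unfolding a_def b_def .
  note inner = class_interval_inner[OF assms(3) class_eq]
  have "a \<in> {a..b}" "b \<in> {a..b}" using assms(3) by auto
  then have k: "seg_class a = k" "seg_class b = k" unfolding class_eq[symmetric] by auto
  have "same_seg w eps P a j \<longleftrightarrow> j \<in> {a..b}" for j
  proof -
    have "same_seg w eps P a j \<longleftrightarrow> 0 < j \<and> j < length P - 1 \<and> seg_class j = k"
      using inner assms(3) k by (auto simp: same_seg_iff_seg_class)
    also have "\<dots> \<longleftrightarrow> j \<in> {i. i \<le> length P - 1 \<and> seg_class i = k} \<and> 0 < j \<and> j < length P - 1"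
      by auto
    also have "\<dots> \<longleftrightarrow> j \<in> {a..b}" unfolding class_eq using inner by auto
    finally show ?thesis .
  qed
  then have "{j. same_seg w eps P a j} = {a..b}" by blast
  then show "is_segment w eps P a b" using inner assms(3) unfolding is_segment_def by simp
  show "plen w (subpath P 0 b) \<le> (1 + eps) ^ k" if "k < B + 1"
  proof -
    have "plen w (subpath P 0 b) \<le> plen w (subpath P 0 (length P - 1)) / 2"
      using seg_class_second_half(1)[of b] inner assms(3) k that by fastforce
    then show ?thesis using seg_class_first_half(3)[of b] inner assms(3) k by simp
  qed
  show "plen w (subpath P a (length P - 1)) \<le> (1 + eps) ^ (2*B+1-k)" if "B + 1 \<le> k"
  proof -
    have "\<not> plen w (subpath P 0 a) \<le> plen w (subpath P 0 (length P - 1)) / 2"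
      using seg_class_first_half(2)[of a] inner assms(3) k that by fastforce
    then show ?thesis
      using seg_class_second_half(3)[of a] plen_suffix[of a] subpath_whole[of P] inner assms(3) k
      by simp
  qed
qed

end

theorem lemma4p5:
  fixes V :: "'v set" and E :: "('v \<times> 'v) set" and w :: "'v \<Rightarrow> 'v \<Rightarrow> real"
    and W :: real and U :: "nat \<Rightarrow> 'v set" and p :: nat and eps :: real
    and P :: "'v list" and u v :: 'v
  assumes "wgraph V E w W"
    and "levels V U p"
    and "0 < eps" and "eps < sqrt 2 - 1"
    and "segment_expath V E w U p eps P u v"
  shows "expath V E w W U p eps P u v"
proof -
  from assms(5) have path: "is_path_in E V P" "hd P = u" "last P = v"
    and seg: "\<And>a b. is_segment w eps P a b \<Longrightarrow>
      \<exists>i\<in>{1..p}. shortest_in E w (Gvert V U p i) (subpath P a b)"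
    unfolding segment_expath_def by auto
  define B where "B = Bnum eps (card V) W"
  interpret weighted_path_segments eps B w P
    unfolding weighted_path_segments_def B_def by (rule path_prefix_distances[OF assms(1) path(1) assms(3)])
  show ?thesis
    unfolding expath_def Let_def B_def[symmetric]
    using path seg class_piece class_end_seg_class_last class_start_le_class_end
      class_end_le_class_start_Suc class_start_Suc_le_Suc_class_end
    by (intro conjI exI[of _ "class_start seg_class (length P - 1)"]
        exI[of _ "class_end seg_class (length P - 1)"]) auto
qed

end
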